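(* Let $(A,* )$ be an involutive associative algebra, $(M,* )$ an involutive $A$-bimodule, $T:M\to A$ a relative Rota-Baxter operator on $A$ with respect to $M$, and $T_t=\sum_{i=0}^Nt^iT_i$ an order $N$ deformation of $T$. Then $T_t$ extends to a deformation of order $N+1$ (i.e. there is $T_{N+1}\in i\mathrm{Hom}(M,A)$ such that $T_t+t^{N+1}T_{N+1}$ is an order $N+1$ deformation) if and only if the class $[\mathrm{Ob}_{T_t}]\in iH^2_T(M,A)$ is trivial, where $\mathrm{Ob}_{T_t}(u,v)=\sum_{i+j=N+1,\,i,j\ge1}\big(T_i(u)T_j(v)-T_i(T_j(u)v+uT_j(v))\big)$.
   Context: An involutive associative algebra is an associative algebra $A$ with a linear map $*:A\to A$ satisfying $a^{**}=a$ and $(ab)^*=b^*a^*$; an involutive $A$-bimodule is an $A$-bimodule $M$ with $*:M\to M$, $u^{**}=u$, $(au)^*=u^*a^*$, $(ua)^*=a^*u^*$. A relative Rota-Baxter operator is a linear $T:M\to A$ with $T(u^* )=T(u)^*$ and $T(u)T(v)=T(uT(v)+T(u)v)$. Notation: $u\circledast v=uT(v)+T(u)v$, $l_T(u,a)=T(u)a-T(ua)$, $r_T(a,u)=aT(u)-T(au)$. Let $i\mathrm{Hom}(M^{\otimes0},A)=\{a\in A\mid a^*=-a\}$ and for $n\ge1$ $i\mathrm{Hom}(M^{\otimes n},A)=\{f\mid f(u_1,\ldots,u_n)^*=(-1)^{\frac{(n-1)(n-2)}{2}}f(u_n^*,\ldots,u_1^* )\}$. Differential: $d_T(a)(u)=l_T(u,a)-r_T(a,u)$,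 and for $n\ge1$, $(d_Tf)(u_1,\ldots,u_{n+1})=(-1)^n\big[l_T(u_1,f(u_2,\ldots,u_{n+1}))+\sum_{i=1}^n(-1)^if(u_1,\ldots,u_i\circledast u_{i+1},\ldots,u_{n+1})+(-1)^{n+1}r_T(f(u_1,\ldots,u_n),u_{n+1})\big]$; $iH^\bullet_T(M,A)$ is the cohomology of $(i\mathrm{Hom}(M^{\otimes\bullet},A),d_T)$. An order $N$ deformation of $T$ is $T_t=\sum_{i=0}^Nt^iT_i$ with $T_0=T$, $T_i\in \mathrm{Hom}(M,A)$, such that $T_k(u^* )=T_k(u)^*$ and $\sum_{i+j=k}T_i(u)T_j(v)=\sum_{i+j=k}T_i(uT_j(v)+T_j(u)v)$ for all $u,v\in M$ and $k=0,\ldots,N$ (equivalently, $T_t$ is a relative Rota-Baxter operator on $A[[t]]/(t^{N+1})$ w.r.t. $M[[t]]/(t^{N+1})$). It is known that $\mathrm{Ob}_{T_t}\in i\mathrm{Hom}(M^{\otimes2},A)$ is a $2$-cocycle for $d_T$. *)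

theory Defs
  imports Complex_Main
begin

definition inv_algebra :: "('k::field \<Rightarrow> 'a::ring \<Rightarrow> 'a) \<Rightarrow> ('a \<Rightarrow> 'a) \<Rightarrow> bool" where
  "inv_algebra sA stA \<longleftrightarrow>
     vector_space sA \<and>
     (\<forall>c x y. sA c (x * y) = sA c x * y \<and> sA c (x * y) = x * sA c y) \<and>
     Vector_Spaces.linear sA sA stA \<and>
     (\<forall>x. stA (stA x) = x) \<and>
     (\<forall>x y. stA (x * y) = stA y * stA x)"

definition inv_bimodule ::
  "('k::field \<Rightarrow> 'a::ring \<Rightarrow> 'a) \<Rightarrow> ('a \<Rightarrow> 'a) \<Rightarrow>
   ('k \<Rightarrow> 'm::ab_group_add \<Rightarrow> 'm) \<Rightarrow> ('m \<Rightarrow> 'm) \<Rightarrow>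
   ('a \<Rightarrow> 'm \<Rightarrow> 'm) \<Rightarrow> ('m \<Rightarrow> 'a \<Rightarrow> 'm) \<Rightarrow> bool" where
  "inv_bimodule sA stA sM stM la ra \<longleftrightarrow>
     vector_space sM \<and>
     (\<forall>a b u. la (a + b) u = la a u + la b u) \<and>
     (\<forall>a u v. la a (u + v) = la a u + la a v) \<and>
     (\<forall>c a u. la (sA c a) u = sM c (la a u) \<and> la a (sM c u) = sM c (la a u)) \<and>
     (\<forall>a b u. ra u (a + b) = ra u a + ra u b) \<and>
     (\<forall>a u v. ra (u + v) a = ra u a + ra v a) \<and>
     (\<forall>c a u. ra u (sA c a) = sM c (ra u a) \<and> ra (sM c u) a = sM c (ra u a)) \<and>
     (\<forall>a b u. la (a * b) u = la a (la b u)) \<and>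
     (\<forall>a b u. ra u (a * b) = ra (ra u a) b) \<and>
     (\<forall>a b u. la a (ra u b) = ra (la a u) b) \<and>
     Vector_Spaces.linear sM sM stM \<and>
     (\<forall>u. stM (stM u) = u) \<and>
     (\<forall>a u. stM (la a u) = ra (stM u) (stA a)) \<and>
     (\<forall>a u. stM (ra u a) = la (stA a) (stM u))"

definition rel_RB ::
  "('k::field \<Rightarrow> 'a::ring \<Rightarrow> 'a) \<Rightarrow> ('a \<Rightarrow> 'a) \<Rightarrow>
   ('k \<Rightarrow> 'm::ab_group_add \<Rightarrow> 'm) \<Rightarrow> ('m \<Rightarrow> 'm) \<Rightarrow>
   ('a \<Rightarrow> 'm \<Rightarrow> 'm) \<Rightarrow> ('m \<Rightarrow> 'a \<Rightarrow> 'm) \<Rightarrow> ('m \<Rightarrow> 'a) \<Rightarrow> bool" where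
  "rel_RB sA stA sM stM la ra T \<longleftrightarrow>
     Vector_Spaces.linear sM sA T \<and>
     (\<forall>u. T (stM u) = stA (T u)) \<and>
     (\<forall>u v. T u * T v = T (ra u (T v) + la (T u) v))"

text \<open>iHom(M,A): linear maps f with f(u)^* = f(u^*) (sign (-1)^0 = 1 for n = 1).\<close>
definition iHom1 ::
  "('k::field \<Rightarrow> 'a::ring \<Rightarrow> 'a) \<Rightarrow> ('a \<Rightarrow> 'a) \<Rightarrow>
   ('k \<Rightarrow> 'm::ab_group_add \<Rightarrow> 'm) \<Rightarrow> ('m \<Rightarrow> 'm) \<Rightarrow> ('m \<Rightarrow> 'a) \<Rightarrow> bool" where
  "iHom1 sA stA sM stM f \<longleftrightarrow>
     Vector_Spaces.linear sM sA f \<and> (\<forall>u. stA (f u) = f (stM u))"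

definition order_deformation ::
  "('k::field \<Rightarrow> 'a::ring \<Rightarrow> 'a) \<Rightarrow> ('a \<Rightarrow> 'a) \<Rightarrow>
   ('k \<Rightarrow> 'm::ab_group_add \<Rightarrow> 'm) \<Rightarrow> ('m \<Rightarrow> 'm) \<Rightarrow>
   ('a \<Rightarrow> 'm \<Rightarrow> 'm) \<Rightarrow> ('m \<Rightarrow> 'a \<Rightarrow> 'm) \<Rightarrow> ('m \<Rightarrow> 'a) \<Rightarrow>
   (nat \<Rightarrow> 'm \<Rightarrow> 'a) \<Rightarrow> nat \<Rightarrow> bool" where
  "order_deformation sA stA sM stM la ra T Ts N \<longleftrightarrow>
     Ts 0 = T \<and>
     (\<forall>i\<le>N. Vector_Spaces.linear sM sA (Ts i)) \<and>
     (\<forall>k\<le>N. \<forall>u. Ts k (stM u) = stA (Ts k u)) \<and>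
     (\<forall>k\<le>N. \<forall>u v.
        (\<Sum>i\<le>k. Ts i u * Ts (k - i) v) =
        (\<Sum>i\<le>k. Ts i (ra u (Ts (k - i) v) + la (Ts (k - i) u) v)))"

definition Ob ::
  "('a::ring \<Rightarrow> 'm::ab_group_add \<Rightarrow> 'm) \<Rightarrow> ('m \<Rightarrow> 'a \<Rightarrow> 'm) \<Rightarrow>
   (nat \<Rightarrow> 'm \<Rightarrow> 'a) \<Rightarrow> nat \<Rightarrow> 'm \<Rightarrow> 'm \<Rightarrow> 'a" where
  "Ob la ra Ts N u v =
     (\<Sum>i\<in>{1..N}. Ts i u * Ts (N + 1 - i) v
        - Ts i (la (Ts (N + 1 - i) u) v + ra u (Ts (N + 1 - i) v)))"

text \<open>The cohomology differential d_T on 1-cochains (the case n = 1 of the formula):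
  (d_T f)(u,v) = (-1)^1 [ l_T(u, f v) - f(u \<circledast> v) + r_T(f u, v) ].\<close>
definition dT1 ::
  "('a::ring \<Rightarrow> 'm::ab_group_add \<Rightarrow> 'm) \<Rightarrow> ('m \<Rightarrow> 'a \<Rightarrow> 'm) \<Rightarrow> ('m \<Rightarrow> 'a) \<Rightarrow>
   ('m \<Rightarrow> 'a) \<Rightarrow> 'm \<Rightarrow> 'm \<Rightarrow> 'a" where
  "dT1 la ra T f u v =
     - ((T u * f v - T (ra u (f v)))
        - f (ra u (T v) + la (T u) v)
        + (f u * T v - T (la (f u) v)))"

definition class_trivial ::
  "('k::field \<Rightarrow> 'a::ring \<Rightarrow> 'a) \<Rightarrow> ('a \<Rightarrow> 'a) \<Rightarrow>
   ('k \<Rightarrow> 'm::ab_group_add \<Rightarrow> 'm) \<Rightarrow> ('m \<Rightarrow> 'm) \<Rightarrow>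
   ('a \<Rightarrow> 'm \<Rightarrow> 'm) \<Rightarrow> ('m \<Rightarrow> 'a \<Rightarrow> 'm) \<Rightarrow> ('m \<Rightarrow> 'a) \<Rightarrow>
   ('m \<Rightarrow> 'm \<Rightarrow> 'a) \<Rightarrow> bool" where
  "class_trivial sA stA sM stM la ra T c \<longleftrightarrow>
     (\<exists>f. iHom1 sA stA sM stM f \<and> (\<forall>u v. c u v = dT1 la ra T f u v))"

end

theory Submission
  imports Defs
begin

text \<open>Adding \<open>t\<^sup>N\<^sup>+\<^sup>1 T'\<close> to an order \<open>N\<close> deformation leaves the equations of degree \<open>\<le> N\<close>
  untouched, so only the coefficient of \<open>t\<^sup>N\<^sup>+\<^sup>1\<close> in \<open>T\<^sub>t(u) T\<^sub>t(v) = T\<^sub>t(u \<circledast>\<^sub>t v)\<close> matters.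
  Its terms containing \<open>T'\<close> (those with \<open>i = 0\<close> or \<open>i = N + 1\<close>) add up to \<open>-(d\<^sub>T T')(u,v)\<close>,
  the others to \<open>Ob(u,v)\<close>; hence the extension exists iff \<open>Ob = d\<^sub>T T'\<close> for some
  \<open>T' \<in> iHom(M,A)\<close>.\<close>

definition deformation_eq ::
  "('a::ring \<Rightarrow> 'm::ab_group_add \<Rightarrow> 'm) \<Rightarrow> ('m \<Rightarrow> 'a \<Rightarrow> 'm) \<Rightarrow>
   (nat \<Rightarrow> 'm \<Rightarrow> 'a) \<Rightarrow> nat \<Rightarrow> 'm \<Rightarrow> 'm \<Rightarrow> bool" where
  "deformation_eq la ra Ts k u v \<longleftrightarrow>
     (\<Sum>i\<le>k. Ts i u * Ts (k - i) v) =
     (\<Sum>i\<le>k. Ts i (ra u (Ts (k - i) v) + la (Ts (k - i) u) v))"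

lemma order_deformation_iff:
  "order_deformation sA stA sM stM la ra T Ts N \<longleftrightarrow>
     Ts 0 = T \<and>
     (\<forall>k\<le>N. iHom1 sA stA sM stM (Ts k)) \<and>
     (\<forall>k\<le>N. \<forall>u v. deformation_eq la ra Ts k u v)"
  unfolding order_deformation_def iHom1_def deformation_eq_def by (auto simp: eq_commute)

lemma deformation_eq_cong:
  assumes "\<And>i. i \<le> k \<Longrightarrow> Ts i = Ts' i"
  shows "deformation_eq la ra Ts k u v \<longleftrightarrow> deformation_eq la ra Ts' k u v"
  unfolding deformation_eq_def using assms
  by (intro arg_cong2[where f = "(=)"] sum.cong) auto

lemma order_deformation_Suc_iff:
  assumes "order_deformation sA stA sM stM la ra T Ts N"
  shows "order_deformation sA stA sM stM la ra T (Ts(Suc N := T')) (Suc N) \<longleftrightarrow>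
           iHom1 sA stA sM stM T' \<and>
           (\<forall>u v. deformation_eq la ra (Ts(Suc N := T')) (Suc N) u v)"
proof -
  have lower: "deformation_eq la ra (Ts(Suc N := T')) k u v \<longleftrightarrow> deformation_eq la ra Ts k u v"
    if "k \<le> N" for k u v
    using that by (intro deformation_eq_cong) simp
  have "(\<forall>k\<le>Suc N. P k) \<longleftrightarrow> (\<forall>k\<le>N. P k) \<and> P (Suc N)" for P
    by (auto simp: le_Suc_eq)
  with assms lower show ?thesis
    unfolding order_deformation_iff by auto
qed

lemma sum_atMost_Suc_split_ends:
  fixes F :: "nat \<Rightarrow> 'b::comm_monoid_add"
  shows "(\<Sum>i\<le>Suc N. F i) = F 0 + (\<Sum>i\<in>{1..N}. F i) + F (Suc N)"
proof -
  have "{..Suc N} = insert 0 (insert (Suc N) {1..N})" by auto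
  then show ?thesis by (simp add: algebra_simps)
qed

lemma deformation_eq_top_iff_Ob_eq_dT1:
  fixes la :: "'a::ring \<Rightarrow> 'm::ab_group_add \<Rightarrow> 'm" and ra :: "'m \<Rightarrow> 'a \<Rightarrow> 'm"
  assumes T0: "Ts 0 = T" and T_add: "\<And>x y. T (x + y) = T x + T y"
  shows "deformation_eq la ra (Ts(Suc N := T')) (Suc N) u v \<longleftrightarrow>
           Ob la ra Ts N u v = dT1 la ra T T' u v"
proof -
  let ?Ts = "Ts(Suc N := T')"
  define P where "P = (\<Sum>i\<in>{1..N}. Ts i u * Ts (N + 1 - i) v)"
  define Q where "Q = (\<Sum>i\<in>{1..N}. Ts i (la (Ts (N + 1 - i) u) v + ra u (Ts (N + 1 - i) v)))"
  have Ob: "Ob la ra Ts N u v = P - Q"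
    unfolding Ob_def P_def Q_def by (simp add: sum_subtractf)
  have lhs: "(\<Sum>i\<le>Suc N. ?Ts i u * ?Ts (Suc N - i) v) = T u * T' v + P + T' u * T v"
    unfolding sum_atMost_Suc_split_ends P_def using T0 by (auto intro!: sum.cong)
  have rhs: "(\<Sum>i\<le>Suc N. ?Ts i (ra u (?Ts (Suc N - i) v) + la (?Ts (Suc N - i) u) v))
      = T (ra u (T' v)) + T (la (T' u) v) + Q + T' (ra u (T v) + la (T u) v)"
    unfolding sum_atMost_Suc_split_ends Q_def using T0
    by (auto intro!: sum.cong simp: T_add add.commute)
  show ?thesis
    unfolding deformation_eq_def lhs rhs Ob dT1_def by (auto simp: algebra_simps T_add)
qed

theorem mainTheorem7:
  fixes sA :: "'k::field \<Rightarrow> 'a::ring \<Rightarrow> 'a" and stA :: "'a \<Rightarrow> 'a"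
    and sM :: "'k \<Rightarrow> 'm::ab_group_add \<Rightarrow> 'm" and stM :: "'m \<Rightarrow> 'm"
    and la :: "'a \<Rightarrow> 'm \<Rightarrow> 'm" and ra :: "'m \<Rightarrow> 'a \<Rightarrow> 'm"
    and T :: "'m \<Rightarrow> 'a" and Ts :: "nat \<Rightarrow> 'm \<Rightarrow> 'a" and N :: nat
  assumes "inv_algebra sA stA"
    and "inv_bimodule sA stA sM stM la ra"
    and "rel_RB sA stA sM stM la ra T"
    and "order_deformation sA stA sM stM la ra T Ts N"
  shows "(\<exists>T'. iHom1 sA stA sM stM T' \<and>
            order_deformation sA stA sM stM la ra T (Ts(Suc N := T')) (Suc N))
         \<longleftrightarrow> class_trivial sA stA sM stM la ra T (Ob la ra Ts N)"
proof -
  have "Vector_Spaces.linear sM sA T"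
    using assms(3) unfolding rel_RB_def by blast
  then have T_add: "T (x + y) = T x + T y" for x y
    unfolding Vector_Spaces.linear_def by (blast intro: module_hom.add)
  have T0: "Ts 0 = T"
    using assms(4) unfolding order_deformation_def by blast
  show ?thesis
    unfolding class_trivial_def order_deformation_Suc_iff[OF assms(4)]
      deformation_eq_top_iff_Ob_eq_dT1[where Ts = Ts, OF T0 T_add] by blast
qed

end
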